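(* Let $\mathbf v=(v_1,\dots,v_m)$ and $\mathbf k=(k_1,\dots,k_m)$ be $m$-tuples of positive integers with $k_i\le v_i$ for all $i$, and let $v_{\max}=\max_i v_i$ and $k_{\min}=\min_i k_i$. Suppose there is an index $i$ with $v_i=v_{\max}$ and $k_i=k_{\min}\ge2$. Then $C(\mathbf v,\mathbf k,2)=C(v_{\max},k_{\min},2)$.
   Context: Let $X_1,\dots,X_m$ be pairwise disjoint sets with $|X_i|=v_i$. A block is an $m$-tuple $(B_1,\dots,B_m)$ with $B_i\subseteq X_i$, $|B_i|=k_i$. An $m$-tuple of sets $(T_1,\dots,T_m)$ is $(\mathbf v,\mathbf k,2)$-admissible if $T_i\subseteq X_i$, $|T_i|\le k_i$ and $\sum|T_i|=2$; it is contained in a block if $T_i\subseteq B_i$ for all $i$. A ${\rm GC}(\mathbf v,\mathbf k,2)$ is a finite family (repetitions allowed) of blocks containing every admissible tuple in at least one block; $C(\mathbf v,\mathbf k,2)$ is the minimum number of blocks. For integers $v\ge k\ge2$, $C(v,k,2)$ is the ordinary covering number: the minimum number of $k$-subsets of a $v$-set such that every $2$-subset is contained in at least one of them. *)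

theory Defs
  imports Main
begin

text \<open>Ground sets are modelled concretely: X_i = {0..<v i} for i < m, regarded as
  pairwise disjoint (tagged by the index i).\<close>

definition is_block :: "nat \<Rightarrow> (nat \<Rightarrow> nat) \<Rightarrow> (nat \<Rightarrow> nat) \<Rightarrow> (nat \<Rightarrow> nat set) \<Rightarrow> bool" where
  "is_block m v k B \<longleftrightarrow>
     (\<forall>i<m. B i \<subseteq> {0..<v i} \<and> card (B i) = k i) \<and> (\<forall>i\<ge>m. B i = {})"

definition admissible2 :: "nat \<Rightarrow> (nat \<Rightarrow> nat) \<Rightarrow> (nat \<Rightarrow> nat) \<Rightarrow> (nat \<Rightarrow> nat set) \<Rightarrow> bool" where
  "admissible2 m v k T \<longleftrightarrow>
     (\<forall>i<m. T i \<subseteq> {0..<v i} \<and> card (T i) \<le> k i) \<and> (\<forall>i\<ge>m. T i = {})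
     \<and> (\<Sum>i<m. card (T i)) = 2"

definition contained_in :: "nat \<Rightarrow> (nat \<Rightarrow> nat set) \<Rightarrow> (nat \<Rightarrow> nat set) \<Rightarrow> bool" where
  "contained_in m T B \<longleftrightarrow> (\<forall>i<m. T i \<subseteq> B i)"

text \<open>A GC(v,k,2): a finite family (list, repetitions allowed) of blocks covering every
  admissible tuple.\<close>
definition is_GC :: "nat \<Rightarrow> (nat \<Rightarrow> nat) \<Rightarrow> (nat \<Rightarrow> nat) \<Rightarrow> (nat \<Rightarrow> nat set) list \<Rightarrow> bool" where
  "is_GC m v k F \<longleftrightarrow>
     (\<forall>B\<in>set F. is_block m v k B) \<and>
     (\<forall>T. admissible2 m v k T \<longrightarrow> (\<exists>B\<in>set F. contained_in m T B))"

definition GC_num :: "nat \<Rightarrow> (nat \<Rightarrow> nat) \<Rightarrow> (nat \<Rightarrow> nat) \<Rightarrow> nat" where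
  "GC_num m v k = (LEAST n. \<exists>F. length F = n \<and> is_GC m v k F)"

definition is_covering :: "nat \<Rightarrow> nat \<Rightarrow> nat set list \<Rightarrow> bool" where
  "is_covering v k F \<longleftrightarrow>
     (\<forall>B\<in>set F. B \<subseteq> {0..<v} \<and> card B = k) \<and>
     (\<forall>P. P \<subseteq> {0..<v} \<and> card P = 2 \<longrightarrow> (\<exists>B\<in>set F. P \<subseteq> B))"

definition cover_num :: "nat \<Rightarrow> nat \<Rightarrow> nat" where
  "cover_num v k = (LEAST n. \<exists>F. length F = n \<and> is_covering v k F)"

end

theory Submission
  imports Defs
begin

text \<open>Projecting a GC onto the coordinate j turns it into a covering of X_j by k_j-sets, since
  every pair inside X_j is admissible. Conversely, a covering of a v_max-set by k_min-sets yields
  a GC of the same size: restrict each covering block to each X_i and pad it up to k_i points.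
  The two points of an admissible tuple lie in a common covering block, hence in the padded block.\<close>

lemma Least_length_eq:
  assumes "\<exists>F. P F"
    and "\<And>F. P F \<Longrightarrow> \<exists>G. Q G \<and> length G \<le> length F"
    and "\<And>G. Q G \<Longrightarrow> \<exists>F. P F \<and> length F \<le> length G"
  shows "(LEAST n. \<exists>F. length F = n \<and> P F) = (LEAST n. \<exists>G. length G = n \<and> Q G)"
    (is "?p = ?q")
proof -
  have Least_le_length: "(LEAST n. \<exists>F. length F = n \<and> R F) \<le> length F" if "R F"
    for R :: "'c list \<Rightarrow> bool" and F
    using that by (blast intro: Least_le)
  have attained: "\<exists>F. R F \<and> length F = (LEAST n. \<exists>F. length F = n \<and> R F)" if "R F"
    for R :: "'c list \<Rightarrow> bool" and F
    using that LeastI_ex[of "\<lambda>n. \<exists>F. length F = n \<and> R F"] by blast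
  obtain F where F: "P F" "length F = ?p"
    using attained[of P] assms(1) by blast
  then obtain G where G: "Q G" "length G \<le> ?p"
    using assms(2) by fastforce
  then obtain G' where G': "Q G'" "length G' = ?q"
    using attained[of Q] by blast
  then obtain F' where F': "P F'" "length F' \<le> ?q"
    using assms(3) by fastforce
  show ?thesis
    using Least_le_length[of Q G] Least_le_length[of P F'] G F' by linarith
qed

lemma covering_exists:
  assumes "2 \<le> K" "K \<le> V"
  shows "\<exists>F. is_covering V K F"
proof -
  have "finite {B. B \<subseteq> {0..<V} \<and> card B = K}" by simp
  from finite_list[OF this] obtain F where F: "set F = {B. B \<subseteq> {0..<V} \<and> card B = K}"
    by blast
  have "\<exists>B\<in>set F. P \<subseteq> B" if "P \<subseteq> {0..<V}" "card P = 2" for P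
    using exists_subset_between[of P K "{0..<V}"] that assms F by auto
  then show ?thesis
    using F unfolding is_covering_def by blast
qed

lemma covering_covers_two_points:
  assumes "is_covering V K F" "2 \<le> V" "x < V" "y < V"
  obtains B where "B \<in> set F" "x \<in> B" "y \<in> B"
proof -
  \<comment> \<open>When x = y, any second point of the ground set completes a pair.\<close>
  define z where "z = (if x \<noteq> y then y else if x = 0 then 1 else 0)"
  have z: "z < V" "z \<noteq> x" "x \<noteq> y \<Longrightarrow> z = y"
    using assms(2,4) by (auto simp: z_def)
  have "{x, z} \<subseteq> {0..<V}" "card {x, z} = 2"
    using assms(3) z by auto
  then obtain B where "B \<in> set F" "{x, z} \<subseteq> B"
    using assms(1) unfolding is_covering_def by (meson Bex_def)
  then show thesis
    using that z by (cases "x = y") auto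
qed

lemma GC_project_is_covering:
  assumes GC: "is_GC m v k F" and j: "j < m" "2 \<le> k j"
  shows "is_covering (v j) (k j) (map (\<lambda>B. B j) F)"
  unfolding is_covering_def
proof (intro conjI allI impI)
  show "\<forall>B\<in>set (map (\<lambda>B. B j) F). B \<subseteq> {0..<v j} \<and> card B = k j"
    using GC j unfolding is_GC_def is_block_def by auto
next
  fix P :: "nat set" assume P: "P \<subseteq> {0..<v j} \<and> card P = 2"
  define T where "T = (\<lambda>i. if i = j then P else {})"
  have "(\<Sum>i<m. card (T i)) = (\<Sum>i<m. if i = j then card P else 0)"
    by (rule sum.cong) (auto simp: T_def)
  also have "\<dots> = 2" using j P by (simp add: sum.delta')
  finally have "admissible2 m v k T"
    unfolding admissible2_def using P j by (auto simp: T_def)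
  then obtain B where "B \<in> set F" "contained_in m T B"
    using GC unfolding is_GC_def by blast
  moreover from this(2) have "P \<subseteq> B j"
    using j unfolding contained_in_def T_def by metis
  ultimately show "\<exists>B\<in>set (map (\<lambda>B. B j) F). P \<subseteq> B"
    by auto
qed

lemma admissible2_Sigma_eq:
  assumes "admissible2 m v k T"
  obtains i x l y where "(SIGMA i:{..<m}. T i) = {(i, x), (l, y)}"
proof -
  have "finite (T i)" if "i < m" for i
    using assms that unfolding admissible2_def by (meson finite_atLeastLessThan finite_subset)
  then have "card (SIGMA i:{..<m}. T i) = 2"
    using assms unfolding admissible2_def by simp
  then show thesis
    using that by (auto simp: card_2_iff)
qed

lemma exists_block_extending:
  assumes "card B = K" "finite B" "\<forall>i<m. K \<le> k i \<and> k i \<le> v i"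
  shows "\<exists>B'. is_block m v k B' \<and> (\<forall>i<m. B \<inter> {0..<v i} \<subseteq> B' i)"
proof -
  have "\<forall>i. \<exists>S. i < m \<longrightarrow> B \<inter> {0..<v i} \<subseteq> S \<and> S \<subseteq> {0..<v i} \<and> card S = k i"
  proof
    fix i
    show "\<exists>S. i < m \<longrightarrow> B \<inter> {0..<v i} \<subseteq> S \<and> S \<subseteq> {0..<v i} \<and> card S = k i"
    proof (cases "i < m")
      case True
      have "card (B \<inter> {0..<v i}) \<le> k i"
        using card_mono[of B "B \<inter> {0..<v i}"] assms True by auto
      then show ?thesis
        using exists_subset_between[of "B \<inter> {0..<v i}" "k i" "{0..<v i}"] assms True by auto
    qed simp
  qed
  then obtain S where S: "\<forall>i<m. B \<inter> {0..<v i} \<subseteq> S i \<and> S i \<subseteq> {0..<v i} \<and> card (S i) = k i"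
    by metis
  show ?thesis
    using S by (intro exI[of _ "\<lambda>i. if i < m then S i else {}"]) (auto simp: is_block_def)
qed

lemma GC_from_covering:
  assumes C: "is_covering V K Cs" and K: "2 \<le> K"
    and le: "\<forall>i<m. K \<le> k i \<and> k i \<le> v i \<and> v i \<le> V"
  shows "\<exists>F. is_GC m v k F \<and> length F = length Cs"
proof -
  have "\<forall>B\<in>set Cs. \<exists>B'. is_block m v k B' \<and> (\<forall>i<m. B \<inter> {0..<v i} \<subseteq> B' i)"
    using C le unfolding is_covering_def
    by (metis exists_block_extending finite_atLeastLessThan finite_subset)
  then obtain ext where ext: "\<And>B. B \<in> set Cs \<Longrightarrow>
      is_block m v k (ext B) \<and> (\<forall>i<m. B \<inter> {0..<v i} \<subseteq> ext B i)"
    by metis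
  have "\<exists>B'\<in>set (map ext Cs). contained_in m T B'" if T: "admissible2 m v k T" for T
  proof -
    obtain i x l y where Sigma: "(SIGMA i:{..<m}. T i) = {(i, x), (l, y)}"
      using admissible2_Sigma_eq[OF T] .
    then have "i < m" "x \<in> T i" "l < m" "y \<in> T l" by blast+
    then have "x < v i" "y < v l"
      using T unfolding admissible2_def by fastforce+
    then have "x < V" "y < V"
      using le \<open>i < m\<close> \<open>l < m\<close> by (meson order.strict_trans2)+
    moreover have "2 \<le> V"
      using le K \<open>i < m\<close> by (meson order.trans)
    ultimately obtain B where B: "B \<in> set Cs" "x \<in> B" "y \<in> B"
      using covering_covers_two_points[OF C] by metis
    have "contained_in m T (ext B)"
      unfolding contained_in_def
    proof (intro allI impI subsetI)
      fix i' w assume "i' < m" "w \<in> T i'"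
      then have "(i', w) \<in> {(i, x), (l, y)}"
        unfolding Sigma[symmetric] by simp
      moreover have "x \<in> ext B i" "y \<in> ext B l"
        using ext[OF B(1)] B \<open>x < v i\<close> \<open>y < v l\<close> \<open>i < m\<close> \<open>l < m\<close> by fastforce+
      ultimately show "w \<in> ext B i'"
        by auto
    qed
    then show ?thesis using B(1) by auto
  qed
  then have "is_GC m v k (map ext Cs)"
    using ext unfolding is_GC_def by auto
  then show ?thesis by auto
qed

theorem corollary3p19:
  fixes m :: nat and v k :: "nat \<Rightarrow> nat" and j :: nat
  assumes "m \<ge> 1"
    and "\<forall>i<m. 0 < k i \<and> k i \<le> v i"
    and "j < m"
    and "v j = Max (v ` {0..<m})"
    and "k j = Min (k ` {0..<m})"
    and "k j \<ge> 2"
  shows "GC_num m v k = cover_num (Max (v ` {0..<m})) (Min (k ` {0..<m}))"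
proof -
  have le: "\<forall>i<m. k j \<le> k i \<and> k i \<le> v i \<and> v i \<le> v j"
    using assms(2,4,5) by auto
  have "GC_num m v k = cover_num (v j) (k j)"
    unfolding GC_num_def cover_num_def
  proof (rule Least_length_eq)
    show "\<exists>F. is_GC m v k F"
      using covering_exists[of "k j" "v j"] GC_from_covering[OF _ assms(6) le] assms(2,3,6) by blast
    show "\<exists>G. is_covering (v j) (k j) G \<and> length G \<le> length F" if "is_GC m v k F" for F
      using GC_project_is_covering[OF that assms(3,6)] by force
    show "\<exists>F. is_GC m v k F \<and> length F \<le> length G" if "is_covering (v j) (k j) G" for G
      using GC_from_covering[OF that assms(6) le] by force
  qed
  then show ?thesis using assms(4,5) by simp
qed

end
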